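(* Let $p$ be the largest eigenvalue of $\boldsymbol{\mathcal T}=\mathbb E_{\mathcal G\in\mathbb G}[\boldsymbol{\mathcal G}_{\rm tr}\otimes\tilde{\boldsymbol{\mathcal G}}]$, where $\boldsymbol{\mathcal G}_{\rm tr}=\boldsymbol{\mathcal G}\boldsymbol\Pi_{\rm tr}$, and define for $m\ge1$ $$\boldsymbol{\mathcal A}_m=p^{-m}\,\mathbb E\big[(\boldsymbol{\mathcal G}_{{\rm tr},m:1})^\dagger\boldsymbol\Pi_{\rm tr}\tilde{\boldsymbol{\mathcal G}}_{m:1}\big],\qquad \boldsymbol{\mathcal B}_m=p^{-m}\,\mathbb E\big[\tilde{\boldsymbol{\mathcal G}}_{m:1}\boldsymbol\Pi_{\rm tr}(\boldsymbol{\mathcal G}_{{\rm tr},m:1})^\dagger\big],$$ with $\boldsymbol{\mathcal A}_\infty=\lim_{m\to\infty}\boldsymbol{\mathcal A}_m$, $\boldsymbol{\mathcal B}_\infty=\lim_{m\to\infty}\boldsymbol{\mathcal B}_m$. Then $${\rm vec}^\dagger(\boldsymbol{\mathcal A}_\infty^T)\,\boldsymbol{\mathcal T}=p\,{\rm vec}^\dagger(\boldsymbol{\mathcal A}_\infty^T),\qquad \boldsymbol{\mathcal T}\,{\rm vec}(\boldsymbol{\mathcal B}_\infty)=p\,{\rm vec}(\boldsymbol{\mathcal B}_\infty).$$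
   Context: $\mathbb G$ is a finite group of unitary channels on a $d$-dimensional system forming a unitary 2-design (as in randomized benchmarking), and $\tilde{\mathbb G}=\{\tilde{\mathcal G}\}$ is a noisy implementation (CPTP maps, possibly gate-dependent) that is a small perturbation of $\mathbb G$, so that the spectrum of $\boldsymbol{\mathcal T}$ is a small perturbation of $\{1,0,0,\dots\}$. Bold symbols are real Liouville matrices (with respect to an orthonormal Hermitian operator basis) of linear maps; $\Pi_{\rm tr}(\rho)=\rho-\mathbb I\operatorname{tr}\rho/d$. Expectations are over independent uniformly random $\mathcal G_1,\dots,\mathcal G_m\in\mathbb G$; $\boldsymbol{\mathcal G}_{m:1}=\boldsymbol{\mathcal G}_m\cdots\boldsymbol{\mathcal G}_1$, $\boldsymbol{\mathcal G}_{{\rm tr},m:1}=\boldsymbol{\mathcal G}_{{\rm tr},m}\cdots\boldsymbol{\mathcal G}_{{\rm tr},1}$, $\tilde{\boldsymbol{\mathcal G}}_{m:1}=\tilde{\boldsymbol{\mathcal G}}_m\cdots\tilde{\boldsymbol{\mathcal G}}_1$. For a matrix $A=\sum_{j,k}a_{jk}e_je_k^T$, ${\rm vec}(A)=\sum_{j,k}a_{jk}e_k\otimes e_j$, and ${\rm vec}^\dagger$ is its conjugate transpose. *)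

theory Defs
  imports "Jordan_Normal_Form.Char_Poly"
begin

definition mtrace :: "'a::comm_monoid_add mat \<Rightarrow> 'a" where
  "mtrace A = (\<Sum>i<dim_row A. A $$ (i,i))"

definition cadj :: "complex mat \<Rightarrow> complex mat" where
  "cadj A = mat (dim_col A) (dim_row A) (\<lambda>(i,j). cnj (A $$ (j,i)))"

definition hermitian :: "complex mat \<Rightarrow> bool" where
  "hermitian A \<longleftrightarrow> cadj A = A"

definition unitary :: "nat \<Rightarrow> complex mat \<Rightarrow> bool" where
  "unitary d U \<longleftrightarrow> U \<in> carrier_mat d d \<and> U * cadj U = 1\<^sub>m d \<and> cadj U * U = 1\<^sub>m d"

definition kron :: "'a::times mat \<Rightarrow> 'a mat \<Rightarrow> 'a mat" where
  "kron A B = mat (dim_row A * dim_row B) (dim_col A * dim_col B)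
     (\<lambda>(i,j). A $$ (i div dim_row B, j div dim_col B) * B $$ (i mod dim_row B, j mod dim_col B))"

text \<open>Column-stacking vectorisation as a (rows*cols) x 1 matrix:
  vec(A) = sum_{j,k} a_{jk} e_k \<otimes> e_j, i.e. entry k*rows + j is a_{jk}.\<close>
definition vecm :: "'a mat \<Rightarrow> 'a mat" where
  "vecm A = mat (dim_row A * dim_col A) 1 (\<lambda>(i,_). A $$ (i mod dim_row A, i div dim_row A))"

text \<open>vec^\<dagger> of a real matrix: conjugate transpose of vec (a row vector).\<close>
definition vecm_dag :: "real mat \<Rightarrow> real mat" where
  "vecm_dag A = transpose_mat (vecm A)"

definition msum :: "nat \<Rightarrow> ('b \<Rightarrow> real mat) \<Rightarrow> 'b set \<Rightarrow> real mat" where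
  "msum D f S = mat D D (\<lambda>(i,j). \<Sum>s\<in>S. f s $$ (i,j))"

definition herm_onb :: "nat \<Rightarrow> (nat \<Rightarrow> complex mat) \<Rightarrow> bool" where
  "herm_onb d B \<longleftrightarrow> (\<forall>i < d*d. B i \<in> carrier_mat d d \<and> hermitian (B i)) \<and>
     (\<forall>i < d*d. \<forall>j < d*d. mtrace (cadj (B i) * B j) = (if i = j then 1 else 0))"

definition liou :: "nat \<Rightarrow> (nat \<Rightarrow> complex mat) \<Rightarrow> (complex mat \<Rightarrow> complex mat) \<Rightarrow> real mat" where
  "liou d B \<Phi> = mat (d*d) (d*d) (\<lambda>(i,j). Re (mtrace (cadj (B i) * \<Phi> (B j))))"

definition unitary_channel :: "complex mat \<Rightarrow> complex mat \<Rightarrow> complex mat" where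
  "unitary_channel U = (\<lambda>\<rho>. U * \<rho> * cadj U)"

definition Pi_tr_map :: "nat \<Rightarrow> complex mat \<Rightarrow> complex mat" where
  "Pi_tr_map d = (\<lambda>\<rho>. \<rho> - (mtrace \<rho> / of_nat d) \<cdot>\<^sub>m 1\<^sub>m d)"

definition psd :: "complex mat \<Rightarrow> bool" where
  "psd A \<longleftrightarrow> hermitian A \<and> (\<exists>n. A \<in> carrier_mat n n \<and>
     (\<forall>v \<in> carrier_vec n. Re (conjugate v \<bullet> (A *\<^sub>v v)) \<ge> 0))"

text \<open>Choi matrix sum_{ij} E_ij \<otimes> Phi(E_ij).\<close>
definition choi :: "nat \<Rightarrow> (complex mat \<Rightarrow> complex mat) \<Rightarrow> complex mat" where
  "choi d \<Phi> = mat (d*d) (d*d)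
     (\<lambda>(a,b). \<Phi> (mat d d (\<lambda>(k,l). if (k,l) = (a div d, b div d) then 1 else 0)) $$ (a mod d, b mod d))"

definition cptp :: "nat \<Rightarrow> (complex mat \<Rightarrow> complex mat) \<Rightarrow> bool" where
  "cptp d \<Phi> \<longleftrightarrow>
     (\<forall>X \<in> carrier_mat d d. \<Phi> X \<in> carrier_mat d d \<and> mtrace (\<Phi> X) = mtrace X) \<and>
     (\<forall>X \<in> carrier_mat d d. \<forall>Y \<in> carrier_mat d d. \<forall>a b. \<Phi> (a \<cdot>\<^sub>m X + b \<cdot>\<^sub>m Y) = a \<cdot>\<^sub>m \<Phi> X + b \<cdot>\<^sub>m \<Phi> Y) \<and>
     psd (choi d \<Phi>)"

definition unitary_channel_group :: "nat \<Rightarrow> (nat \<Rightarrow> complex mat) \<Rightarrow> real mat set \<Rightarrow> bool" where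
  "unitary_channel_group d B G \<longleftrightarrow> finite G \<and> G \<noteq> {} \<and>
     (\<forall>g\<in>G. \<exists>U. unitary d U \<and> g = liou d B (unitary_channel U)) \<and>
     (\<forall>g\<in>G. \<forall>h\<in>G. g * h \<in> G)"

text \<open>A unitary implementing the channel g (well defined up to a global phase).\<close>
definition unitary_of :: "nat \<Rightarrow> (nat \<Rightarrow> complex mat) \<Rightarrow> real mat \<Rightarrow> complex mat" where
  "unitary_of d B g = (SOME U. unitary d U \<and> g = liou d B (unitary_channel U))"

definition swap_op :: "nat \<Rightarrow> complex mat" where
  "swap_op d = mat (d*d) (d*d) (\<lambda>(a,b). if a div d = b mod d \<and> a mod d = b div d then 1 else 0)"

text \<open>Unitary 2-design: the uniform average of U\<otimes>U X (U\<otimes>U)^\<dagger> over the group equals the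
  Haar average, which is given by the standard closed (Weingarten) formula.\<close>
definition unitary_2_design :: "nat \<Rightarrow> (nat \<Rightarrow> complex mat) \<Rightarrow> real mat set \<Rightarrow> bool" where
  "unitary_2_design d B G \<longleftrightarrow>
     (\<forall>X \<in> carrier_mat (d*d) (d*d).
        (1 / of_nat (card G)) \<cdot>\<^sub>m
          mat (d*d) (d*d) (\<lambda>(i,j). \<Sum>g\<in>G.
             (let U = unitary_of d B g in kron U U * X * cadj (kron U U)) $$ (i,j))
        = ((mtrace X - mtrace (swap_op d * X) / of_nat d) / (of_nat d ^ 2 - 1)) \<cdot>\<^sub>m 1\<^sub>m (d*d)
          + ((mtrace (swap_op d * X) - mtrace X / of_nat d) / (of_nat d ^ 2 - 1)) \<cdot>\<^sub>m swap_op d)"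

text \<open>seq_prod f [g1,...,gm] = f gm * ... * f g1.\<close>
fun seq_prod :: "nat \<Rightarrow> ('g \<Rightarrow> real mat) \<Rightarrow> 'g list \<Rightarrow> real mat" where
  "seq_prod D f [] = 1\<^sub>m D"
| "seq_prod D f (g # gs) = seq_prod D f gs * f g"

definition seqs :: "'g set \<Rightarrow> nat \<Rightarrow> 'g list set" where
  "seqs G m = {gs. set gs \<subseteq> G \<and> length gs = m}"

definition expect_seq :: "nat \<Rightarrow> 'g set \<Rightarrow> nat \<Rightarrow> ('g list \<Rightarrow> real mat) \<Rightarrow> real mat" where
  "expect_seq D G m F = (1 / real (card G) ^ m) \<cdot>\<^sub>m msum D F (seqs G m)"


definition Pi_tr :: "nat \<Rightarrow> (nat \<Rightarrow> complex mat) \<Rightarrow> real mat" where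
  "Pi_tr d B = liou d B (Pi_tr_map d)"

definition T_op :: "nat \<Rightarrow> (nat \<Rightarrow> complex mat) \<Rightarrow> real mat set \<Rightarrow> (real mat \<Rightarrow> real mat) \<Rightarrow> real mat" where
  "T_op d B G Gt = (1 / real (card G)) \<cdot>\<^sub>m
     msum ((d*d)*(d*d)) (\<lambda>g. kron (g * Pi_tr d B) (Gt g)) G"

definition A_m :: "nat \<Rightarrow> (nat \<Rightarrow> complex mat) \<Rightarrow> real mat set \<Rightarrow> (real mat \<Rightarrow> real mat) \<Rightarrow> real \<Rightarrow> nat \<Rightarrow> real mat" where
  "A_m d B G Gt p m = (1 / p ^ m) \<cdot>\<^sub>m expect_seq (d*d) G m
     (\<lambda>gs. transpose_mat (seq_prod (d*d) (\<lambda>g. g * Pi_tr d B) gs) * Pi_tr d B * seq_prod (d*d) Gt gs)"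

definition B_m :: "nat \<Rightarrow> (nat \<Rightarrow> complex mat) \<Rightarrow> real mat set \<Rightarrow> (real mat \<Rightarrow> real mat) \<Rightarrow> real \<Rightarrow> nat \<Rightarrow> real mat" where
  "B_m d B G Gt p m = (1 / p ^ m) \<cdot>\<^sub>m expect_seq (d*d) G m
     (\<lambda>gs. seq_prod (d*d) Gt gs * Pi_tr d B * transpose_mat (seq_prod (d*d) (\<lambda>g. g * Pi_tr d B) gs))"

definition mat_tendsto :: "nat \<Rightarrow> (nat \<Rightarrow> real mat) \<Rightarrow> real mat \<Rightarrow> bool" where
  "mat_tendsto n X L \<longleftrightarrow> L \<in> carrier_mat n n \<and>
     (\<forall>i<n. \<forall>j<n. (\<lambda>m. X m $$ (i,j)) \<longlonglongrightarrow> L $$ (i,j))"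

end

theory Submission
  imports Defs
begin

text \<open>Splitting off the first gate of a random sequence (the last one for B) gives
  A (m+1) = p^-1 E_G[(G Pi_tr)^T (A m) G~] and B (m+1) = p^-1 E_G[G~ (B m) (G Pi_tr)^T].
  Under vectorisation the map X |-> E_G[C^T X E] becomes right multiplication of vec^dag(X^T)
  by E_G[C (x) E], and X |-> E_G[E X C^T] becomes left multiplication of vec(X) by the same
  matrix; for C = G Pi_tr and E = G~ this matrix is T. Passing to the limit in
  vec^dag(A (m+1)^T) = p^-1 vec^dag(A m^T) T and vec(B (m+1)) = p^-1 T vec(B m) gives the
  eigen-equations. For p = 0, where HOL has 1/0 = 0, A m and B m vanish for m > 0,
  so both limits are zero and the claim holds trivially.\<close>

lemma less_mult_imp_div_mod_less:
  fixes k :: nat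
  assumes "k < a * b"
  shows "k div b < a" "k mod b < b"
proof -
  have "b \<noteq> 0" using assms by (cases b) auto
  then show "k div b < a" "k mod b < b" using assms by (simp_all add: less_mult_imp_div_less)
qed

lemma sum_lessThan_mult_div_mod:
  fixes f :: "nat \<Rightarrow> nat \<Rightarrow> 'a::comm_monoid_add"
  shows "(\<Sum>k<a * b. f (k div b) (k mod b)) = (\<Sum>i<a. \<Sum>j<b. f i j)"
proof -
  have "(\<Sum>k<a * b. f (k div b) (k mod b)) = (\<Sum>(i, j)\<in>{..<a} \<times> {..<b}. f i j)"
  proof (rule sum.reindex_bij_witness
      [where i = "\<lambda>(i, j). i * b + j" and j = "\<lambda>k. (k div b, k mod b)"])
    fix k assume "k \<in> {..<a * b}"
    then show "(k div b, k mod b) \<in> {..<a} \<times> {..<b}"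
      by (cases "b = 0") (auto simp: less_mult_imp_div_less)
  next
    fix ij assume "ij \<in> {..<a} \<times> {..<b}"
    moreover have "i * b + j < a * b" if "i < a" "j < b" for i j
    proof -
      have "i * b + j < Suc i * b" using that by simp
      also have "\<dots> \<le> a * b" using that by (intro mult_le_mono1) simp
      finally show ?thesis .
    qed
    ultimately show "(\<lambda>(i, j). i * b + j) ij \<in> {..<a * b}" by auto
  qed auto
  then show ?thesis by (simp add: sum.cartesian_product)
qed

lemma index_mult_mult_mat:
  assumes "A \<in> carrier_mat r n" "B \<in> carrier_mat n m" "C \<in> carrier_mat m q" "i < r" "j < q"
  shows "(A * B * C) $$ (i, j) = (\<Sum>b<m. \<Sum>a<n. A $$ (i, a) * B $$ (a, b) * C $$ (b, j))"
proof -
  have "(A * B * C) $$ (i, j) = (\<Sum>b<m. (\<Sum>a<n. A $$ (i, a) * B $$ (a, b)) * C $$ (b, j))"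
    using assms by (simp add: scalar_prod_def lessThan_atLeast0 del: assoc_mult_mat)
  then show ?thesis by (simp add: sum_distrib_right)
qed

lemma mult_sandwich_assoc:
  assumes "A \<in> carrier_mat D D" "X \<in> carrier_mat D D" "P \<in> carrier_mat D D"
    "Y \<in> carrier_mat D D" "B \<in> carrier_mat D D"
  shows "A * X * P * (Y * B) = A * (X * P * Y) * B"
  using assms by (simp add: assoc_mult_mat[of _ D D _ D _ D])

lemma transpose_smult_mat: "transpose_mat (c \<cdot>\<^sub>m X) = c \<cdot>\<^sub>m transpose_mat X"
  by (rule eq_matI) auto

lemma smult_smult_mat:
  fixes A :: "'a::semigroup_mult mat"
  shows "a \<cdot>\<^sub>m (b \<cdot>\<^sub>m A) = (a * b) \<cdot>\<^sub>m A"
  by (rule eq_matI) (auto simp: mult.assoc)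

lemma smult_mult_smult:
  fixes A B :: "'a::comm_semiring_0 mat"
  assumes "A \<in> carrier_mat r n" "B \<in> carrier_mat n c"
  shows "(a \<cdot>\<^sub>m A) * (b \<cdot>\<^sub>m B) = (a * b) \<cdot>\<^sub>m (A * B)"
proof -
  have "(a \<cdot>\<^sub>m A) * (b \<cdot>\<^sub>m B) = a \<cdot>\<^sub>m (A * (b \<cdot>\<^sub>m B))"
    using assms by (intro mult_smult_assoc_mat) auto
  also have "A * (b \<cdot>\<^sub>m B) = b \<cdot>\<^sub>m (A * B)"
    using assms by (rule mult_smult_distrib)
  finally show ?thesis by (simp add: smult_smult_mat)
qed

lemma msum_carrier [simp]: "msum D F S \<in> carrier_mat D D"
  by (simp add: msum_def)

lemma dim_msum [simp]: "dim_row (msum D F S) = D" "dim_col (msum D F S) = D"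
  by (simp_all add: msum_def)

lemma index_msum [simp]:
  "i < D \<Longrightarrow> j < D \<Longrightarrow> msum D F S $$ (i, j) = (\<Sum>s\<in>S. F s $$ (i, j))"
  by (simp add: msum_def)

lemma msum_cong: "(\<And>s. s \<in> S \<Longrightarrow> F s = F' s) \<Longrightarrow> msum D F S = msum D F' S"
  by (simp add: msum_def)

lemma index_mult_msum:
  assumes "A \<in> carrier_mat r D" "\<And>s. s \<in> S \<Longrightarrow> F s \<in> carrier_mat D D" "i < r" "j < D"
  shows "(A * msum D F S) $$ (i, j) = (\<Sum>s\<in>S. (A * F s) $$ (i, j))"
proof -
  have "(A * msum D F S) $$ (i, j) = (\<Sum>k<D. \<Sum>s\<in>S. A $$ (i, k) * F s $$ (k, j))"
    using assms by (simp add: msum_def scalar_prod_def lessThan_atLeast0 sum_distrib_left)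
  also have "\<dots> = (\<Sum>s\<in>S. \<Sum>k<D. A $$ (i, k) * F s $$ (k, j))"
    by (rule sum.swap)
  also have "\<dots> = (\<Sum>s\<in>S. (A * F s) $$ (i, j))"
    using assms by (intro sum.cong) (auto dest!: assms(2) simp: scalar_prod_def lessThan_atLeast0)
  finally show ?thesis .
qed

lemma index_msum_mult:
  assumes "A \<in> carrier_mat D c" "\<And>s. s \<in> S \<Longrightarrow> F s \<in> carrier_mat D D" "i < D" "j < c"
  shows "(msum D F S * A) $$ (i, j) = (\<Sum>s\<in>S. (F s * A) $$ (i, j))"
proof -
  have "(msum D F S * A) $$ (i, j) = (\<Sum>k<D. \<Sum>s\<in>S. F s $$ (i, k) * A $$ (k, j))"
    using assms by (simp add: msum_def scalar_prod_def lessThan_atLeast0 sum_distrib_right)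
  also have "\<dots> = (\<Sum>s\<in>S. \<Sum>k<D. F s $$ (i, k) * A $$ (k, j))"
    by (rule sum.swap)
  also have "\<dots> = (\<Sum>s\<in>S. (F s * A) $$ (i, j))"
    using assms by (intro sum.cong) (auto dest!: assms(2) simp: scalar_prod_def lessThan_atLeast0)
  finally show ?thesis .
qed

lemma mult_msum_mult:
  assumes "C \<in> carrier_mat D D" "E \<in> carrier_mat D D"
    and "\<And>s. s \<in> S \<Longrightarrow> F s \<in> carrier_mat D D"
  shows "C * msum D F S * E = msum D (\<lambda>s. C * F s * E) S"
proof -
  have CF: "\<And>s. s \<in> S \<Longrightarrow> C * F s \<in> carrier_mat D D"
    using assms by auto
  have "C * msum D F S = msum D (\<lambda>s. C * F s) S"
    using assms by (intro eq_matI)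
      (auto simp: index_mult_msum[OF assms(1,3)] index_mult_mat(2,3) simp del: index_mult_mat(1))
  also have "\<dots> * E = msum D (\<lambda>s. C * F s * E) S"
    using assms by (intro eq_matI)
      (auto simp: index_msum_mult[OF assms(2) CF] index_mult_mat(2,3) simp del: index_mult_mat(1))
  finally show ?thesis .
qed

section \<open>Kronecker products and vectorisation\<close>

lemma index_kron [simp]:
  "dim_row (kron A B) = dim_row A * dim_row B"
  "dim_col (kron A B) = dim_col A * dim_col B"
  "i < dim_row A * dim_row B \<Longrightarrow> j < dim_col A * dim_col B \<Longrightarrow> kron A B $$ (i, j) =
     A $$ (i div dim_row B, j div dim_col B) * B $$ (i mod dim_row B, j mod dim_col B)"
  by (simp_all add: kron_def)

lemma kron_carrier_mat [simp]:
  "A \<in> carrier_mat r c \<Longrightarrow> B \<in> carrier_mat r' c' \<Longrightarrow>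
    kron A B \<in> carrier_mat (r * r') (c * c')"
  by (simp add: kron_def)

lemma transpose_kron: "transpose_mat (kron A B) = kron (transpose_mat A) (transpose_mat B)"
proof (rule eq_matI)
  fix i j assume "i < dim_row (kron (transpose_mat A) (transpose_mat B))"
    "j < dim_col (kron (transpose_mat A) (transpose_mat B))"
  then show "transpose_mat (kron A B) $$ (i, j) = kron (transpose_mat A) (transpose_mat B) $$ (i, j)"
    by (simp add: less_mult_imp_div_mod_less)
qed simp_all

lemma index_vecm [simp]:
  "dim_row (vecm A) = dim_row A * dim_col A"
  "dim_col (vecm A) = 1"
  "i < dim_row A * dim_col A \<Longrightarrow> vecm A $$ (i, 0) = A $$ (i mod dim_row A, i div dim_row A)"
  by (simp_all add: vecm_def)

lemma vecm_carrier_mat: "X \<in> carrier_mat r c \<Longrightarrow> vecm X \<in> carrier_mat (r * c) 1"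
  by (simp add: vecm_def)

lemma vecm_smult: "vecm (c \<cdot>\<^sub>m X) = c \<cdot>\<^sub>m vecm X"
  by (rule eq_matI) (auto simp: vecm_def less_mult_imp_div_mod_less mult.commute)

lemma index_vecm_dag_transpose [simp]:
  "dim_row (vecm_dag (transpose_mat Y)) = 1"
  "dim_col (vecm_dag (transpose_mat Y)) = dim_row Y * dim_col Y"
  "i < dim_row Y * dim_col Y \<Longrightarrow>
    vecm_dag (transpose_mat Y) $$ (0, i) = Y $$ (i div dim_col Y, i mod dim_col Y)"
  using less_mult_imp_div_mod_less[of i "dim_row Y" "dim_col Y"]
  by (simp_all add: vecm_dag_def mult.commute)

lemma vecm_dag_transpose_carrier_mat:
  "X \<in> carrier_mat n n \<Longrightarrow> vecm_dag (transpose_mat X) \<in> carrier_mat 1 (n * n)"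
  by (simp add: vecm_dag_def vecm_def)

lemma vecm_dag_transpose_smult:
  "vecm_dag (transpose_mat (c \<cdot>\<^sub>m X)) = c \<cdot>\<^sub>m vecm_dag (transpose_mat X)"
  by (simp add: vecm_dag_def transpose_smult_mat vecm_smult)

lemma kron_mult_vecm:
  fixes C E X :: "'a::comm_semiring_0 mat"
  assumes C: "C \<in> carrier_mat r c" and E: "E \<in> carrier_mat r' c'" and X: "X \<in> carrier_mat c' c"
  shows "kron C E * vecm X = vecm (E * X * transpose_mat C)"
proof (rule eq_matI)
  fix i k assume "i < dim_row (vecm (E * X * transpose_mat C))" "k < dim_col (vecm (E * X * transpose_mat C))"
  with assms have i: "i < r * r'" and k: "k = 0" by (auto simp: mult.commute)
  then have i_div: "i div r' < r" and i_mod: "i mod r' < r'"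
    by (simp_all add: less_mult_imp_div_mod_less)
  have "(kron C E * vecm X) $$ (i, 0) =
      (\<Sum>l<c * c'. C $$ (i div r', l div c') * E $$ (i mod r', l mod c') * X $$ (l mod c', l div c'))"
    using assms i by (simp add: scalar_prod_def lessThan_atLeast0 mult.commute)
  also have "\<dots> = (\<Sum>b<c. \<Sum>a<c'. C $$ (i div r', b) * E $$ (i mod r', a) * X $$ (a, b))"
    by (rule sum_lessThan_mult_div_mod)
  also have "\<dots> = (E * X * transpose_mat C) $$ (i mod r', i div r')"
    using C i_div by (subst index_mult_mult_mat[OF E X _ i_mod i_div]) (auto intro!: sum.cong simp: mult_ac)
  finally show "(kron C E * vecm X) $$ (i, k) = vecm (E * X * transpose_mat C) $$ (i, k)"
    using assms i k by (simp add: mult.commute)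
qed (use assms in auto)

lemma vecm_dag_transpose_mult_kron:
  assumes "C \<in> carrier_mat r c" "E \<in> carrier_mat r' c'" "X \<in> carrier_mat r r'"
  shows "vecm_dag (transpose_mat X) * kron C E = vecm_dag (transpose_mat (transpose_mat C * X * E))"
proof -
  have "transpose_mat (transpose_mat C * X * E) = transpose_mat E * transpose_mat (transpose_mat C * X)"
    using assms by (intro transpose_mult) auto
  also have "transpose_mat (transpose_mat C * X) = transpose_mat X * C"
    using assms by (subst transpose_mult[of _ c r]) auto
  finally have "vecm_dag (transpose_mat (transpose_mat C * X * E))
      = transpose_mat (vecm (transpose_mat E * (transpose_mat X * C)))"
    by (simp add: vecm_dag_def)
  also have "\<dots> = transpose_mat (kron (transpose_mat C) (transpose_mat E) * vecm (transpose_mat X))"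
    using assms by (simp add: kron_mult_vecm)
  also have "\<dots> = vecm_dag (transpose_mat X) * kron C E"
    using assms by (subst transpose_mult[of _ "c * c'" "r * r'" _ 1])
      (auto simp: vecm_dag_def transpose_kron mult.commute)
  finally show ?thesis by simp
qed

lemma msum_kron_mult_vecm:
  assumes "\<And>g. g \<in> S \<Longrightarrow> C g \<in> carrier_mat n n"
    and "\<And>g. g \<in> S \<Longrightarrow> E g \<in> carrier_mat n n"
    and "X \<in> carrier_mat n n"
  shows "msum (n * n) (\<lambda>g. kron (C g) (E g)) S * vecm X
    = vecm (msum n (\<lambda>g. E g * X * transpose_mat (C g)) S)"
proof (rule eq_matI)
  fix i k assume "i < dim_row (vecm (msum n (\<lambda>g. E g * X * transpose_mat (C g)) S))"
    "k < dim_col (vecm (msum n (\<lambda>g. E g * X * transpose_mat (C g)) S))"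
  then have i: "i < n * n" and k: "k = 0" by auto
  have dims [simp]: "dim_row (C g) = n" "dim_col (C g) = n" "dim_row (E g) = n" "dim_col (E g) = n"
    if "g \<in> S" for g
    using assms that by auto
  have "(msum (n * n) (\<lambda>g. kron (C g) (E g)) S * vecm X) $$ (i, 0)
      = (\<Sum>g\<in>S. vecm (E g * X * transpose_mat (C g)) $$ (i, 0))"
    using assms i by (subst index_msum_mult)
      (auto simp: kron_mult_vecm[where r = n and c = n and r' = n and c' = n] intro!: sum.cong)
  also have "\<dots> = vecm (msum n (\<lambda>g. E g * X * transpose_mat (C g)) S) $$ (i, 0)"
    using assms i by (auto simp: less_mult_imp_div_mod_less intro!: sum.cong)
  finally show "(msum (n * n) (\<lambda>g. kron (C g) (E g)) S * vecm X) $$ (i, k)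
      = vecm (msum n (\<lambda>g. E g * X * transpose_mat (C g)) S) $$ (i, k)"
    using k by simp
qed (use assms in auto)

lemma vecm_dag_transpose_mult_msum_kron:
  assumes "\<And>g. g \<in> S \<Longrightarrow> C g \<in> carrier_mat n n"
    and "\<And>g. g \<in> S \<Longrightarrow> E g \<in> carrier_mat n n"
    and "X \<in> carrier_mat n n"
  shows "vecm_dag (transpose_mat X) * msum (n * n) (\<lambda>g. kron (C g) (E g)) S
    = vecm_dag (transpose_mat (msum n (\<lambda>g. transpose_mat (C g) * X * E g) S))"
proof (rule eq_matI)
  fix k i assume "k < dim_row (vecm_dag (transpose_mat (msum n (\<lambda>g. transpose_mat (C g) * X * E g) S)))"
    "i < dim_col (vecm_dag (transpose_mat (msum n (\<lambda>g. transpose_mat (C g) * X * E g) S)))"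
  then have i: "i < n * n" and k: "k = 0" by auto
  have dims [simp]: "dim_row (C g) = n" "dim_col (C g) = n" "dim_row (E g) = n" "dim_col (E g) = n"
    if "g \<in> S" for g
    using assms that by auto
  have "(vecm_dag (transpose_mat X) * msum (n * n) (\<lambda>g. kron (C g) (E g)) S) $$ (0, i)
      = (\<Sum>g\<in>S. vecm_dag (transpose_mat (transpose_mat (C g) * X * E g)) $$ (0, i))"
    using assms i by (subst index_mult_msum[where r = 1])
      (auto simp: vecm_dag_transpose_mult_kron[where r = n and c = n and r' = n and c' = n]
        intro!: sum.cong)
  also have "\<dots> = vecm_dag (transpose_mat (msum n (\<lambda>g. transpose_mat (C g) * X * E g) S)) $$ (0, i)"
    using assms i by (auto simp: less_mult_imp_div_mod_less intro!: sum.cong)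
  finally show "(vecm_dag (transpose_mat X) * msum (n * n) (\<lambda>g. kron (C g) (E g)) S) $$ (k, i)
      = vecm_dag (transpose_mat (msum n (\<lambda>g. transpose_mat (C g) * X * E g) S)) $$ (k, i)"
    using k by simp
qed (use assms in auto)

section \<open>Averages over random gate sequences\<close>

lemma seqs_Suc_cons: "seqs G (Suc m) = (\<lambda>(g, gs). g # gs) ` (G \<times> seqs G m)"
  unfolding seqs_def by (auto simp: length_Suc_conv image_iff)

lemma seqs_Suc_snoc: "seqs G (Suc m) = (\<lambda>(g, gs). gs @ [g]) ` (G \<times> seqs G m)"
proof (intro equalityI subsetI)
  fix xs assume xs: "xs \<in> seqs G (Suc m)"
  then have "xs \<noteq> []" by (auto simp: seqs_def)
  with xs have "last xs \<in> G" "butlast xs \<in> seqs G m"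
    by (auto simp: seqs_def dest: in_set_butlastD)
  moreover have "xs = butlast xs @ [last xs]" using \<open>xs \<noteq> []\<close> by simp
  ultimately show "xs \<in> (\<lambda>(g, gs). gs @ [g]) ` (G \<times> seqs G m)" by force
qed (auto simp: seqs_def)

lemma sum_seqs_Suc_cons:
  "(\<Sum>gs\<in>seqs G (Suc m). f gs) = (\<Sum>g\<in>G. \<Sum>gs\<in>seqs G m. f (g # gs))"
proof -
  have "inj_on (\<lambda>(g, gs). g # gs) (G \<times> seqs G m)" by (auto simp: inj_on_def)
  then show ?thesis
    by (simp add: seqs_Suc_cons sum.reindex sum.cartesian_product split_def)
qed

lemma sum_seqs_Suc_snoc:
  "(\<Sum>gs\<in>seqs G (Suc m). f gs) = (\<Sum>g\<in>G. \<Sum>gs\<in>seqs G m. f (gs @ [g]))"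
proof -
  have "inj_on (\<lambda>(g, gs). gs @ [g]) (G \<times> seqs G m)" by (auto simp: inj_on_def)
  then show ?thesis
    by (simp add: seqs_Suc_snoc sum.reindex sum.cartesian_product split_def)
qed

lemma seq_prod_carrier:
  "(\<And>g. g \<in> set gs \<Longrightarrow> f g \<in> carrier_mat D D) \<Longrightarrow>
    seq_prod D f gs \<in> carrier_mat D D"
  by (induction gs) auto

lemma seq_prod_snoc:
  assumes "\<And>g. g \<in> set gs \<Longrightarrow> f g \<in> carrier_mat D D" "f x \<in> carrier_mat D D"
  shows "seq_prod D f (gs @ [x]) = f x * seq_prod D f gs"
  using assms
proof (induction gs)
  case (Cons g gs)
  then have "seq_prod D f (gs @ [x]) * f g = f x * (seq_prod D f gs * f g)"
    by (auto intro!: assoc_mult_mat seq_prod_carrier)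
  then show ?case by simp
qed simp

lemma expect_seq_cong:
  "(\<And>gs. gs \<in> seqs G m \<Longrightarrow> F gs = F' gs) \<Longrightarrow> expect_seq D G m F = expect_seq D G m F'"
  by (simp add: expect_seq_def msum_def)

lemma expect_seq_Suc_cons:
  "expect_seq D G (Suc m) F =
     (1 / real (card G)) \<cdot>\<^sub>m msum D (\<lambda>g. expect_seq D G m (\<lambda>gs. F (g # gs))) G"
  by (rule eq_matI)
    (auto simp: expect_seq_def msum_def sum_seqs_Suc_cons sum_distrib_left)

lemma expect_seq_Suc_snoc:
  "expect_seq D G (Suc m) F =
     (1 / real (card G)) \<cdot>\<^sub>m msum D (\<lambda>g. expect_seq D G m (\<lambda>gs. F (gs @ [g]))) G"
  by (rule eq_matI)
    (auto simp: expect_seq_def msum_def sum_seqs_Suc_snoc sum_distrib_left)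

lemma expect_seq_mult_mult:
  assumes "C \<in> carrier_mat D D" "E \<in> carrier_mat D D"
    and "\<And>gs. gs \<in> seqs G m \<Longrightarrow> F gs \<in> carrier_mat D D"
  shows "expect_seq D G m (\<lambda>gs. C * F gs * E) = C * expect_seq D G m F * E"
proof -
  have "C * expect_seq D G m F * E = (1 / real (card G) ^ m) \<cdot>\<^sub>m (C * msum D F (seqs G m) * E)"
    by (simp add: expect_seq_def mult_smult_distrib[OF assms(1) msum_carrier]
        mult_smult_assoc_mat[OF mult_carrier_mat[OF assms(1) msum_carrier] assms(2)])
  then show ?thesis
    using assms by (simp add: expect_seq_def mult_msum_mult)
qed

lemma expect_seq_Suc_sandwich_transpose_left:
  assumes C: "\<And>g. g \<in> G \<Longrightarrow> C g \<in> carrier_mat D D"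
    and E: "\<And>g. g \<in> G \<Longrightarrow> E g \<in> carrier_mat D D"
    and P: "P \<in> carrier_mat D D"
  shows "expect_seq D G (Suc m) (\<lambda>gs. transpose_mat (seq_prod D C gs) * P * seq_prod D E gs)
    = (1 / real (card G)) \<cdot>\<^sub>m msum D (\<lambda>g. transpose_mat (C g)
        * expect_seq D G m (\<lambda>gs. transpose_mat (seq_prod D C gs) * P * seq_prod D E gs) * E g) G"
proof -
  let ?F = "\<lambda>gs. transpose_mat (seq_prod D C gs) * P * seq_prod D E gs"
  have carrier: "seq_prod D C gs \<in> carrier_mat D D" "seq_prod D E gs \<in> carrier_mat D D"
    if "gs \<in> seqs G m" for gs
    using that C E by (auto simp: seqs_def intro!: seq_prod_carrier)
  then have F_carrier: "?F gs \<in> carrier_mat D D" if "gs \<in> seqs G m" for gs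
    using that P by (meson mult_carrier_mat transpose_carrier_mat)
  have step: "expect_seq D G m (\<lambda>gs. ?F (g # gs)) = transpose_mat (C g) * expect_seq D G m ?F * E g"
    if g: "g \<in> G" for g
  proof -
    have "expect_seq D G m (\<lambda>gs. ?F (g # gs)) = expect_seq D G m (\<lambda>gs. transpose_mat (C g) * ?F gs * E g)"
    proof (rule expect_seq_cong)
      fix gs assume "gs \<in> seqs G m"
      then show "?F (g # gs) = transpose_mat (C g) * ?F gs * E g"
        using carrier C[OF g] E[OF g] P
        by (simp add: transpose_mult[of _ D D] mult_sandwich_assoc del: assoc_mult_mat)
    qed
    also have "\<dots> = transpose_mat (C g) * expect_seq D G m ?F * E g"
      using C[OF g] E[OF g] F_carrier by (intro expect_seq_mult_mult) auto
    finally show ?thesis .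
  qed
  show ?thesis
    unfolding expect_seq_Suc_cons
    by (rule arg_cong[where f = "\<lambda>M. _ \<cdot>\<^sub>m M"], rule msum_cong, rule step)
qed

lemma expect_seq_Suc_sandwich_transpose_right:
  assumes C: "\<And>g. g \<in> G \<Longrightarrow> C g \<in> carrier_mat D D"
    and E: "\<And>g. g \<in> G \<Longrightarrow> E g \<in> carrier_mat D D"
    and P: "P \<in> carrier_mat D D"
  shows "expect_seq D G (Suc m) (\<lambda>gs. seq_prod D E gs * P * transpose_mat (seq_prod D C gs))
    = (1 / real (card G)) \<cdot>\<^sub>m msum D (\<lambda>g. E g
        * expect_seq D G m (\<lambda>gs. seq_prod D E gs * P * transpose_mat (seq_prod D C gs))
        * transpose_mat (C g)) G"
proof -
  let ?F = "\<lambda>gs. seq_prod D E gs * P * transpose_mat (seq_prod D C gs)"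
  have carrier: "seq_prod D C gs \<in> carrier_mat D D" "seq_prod D E gs \<in> carrier_mat D D"
    if "gs \<in> seqs G m" for gs
    using that C E by (auto simp: seqs_def intro!: seq_prod_carrier)
  then have F_carrier: "?F gs \<in> carrier_mat D D" if "gs \<in> seqs G m" for gs
    using that P by (meson mult_carrier_mat transpose_carrier_mat)
  have step: "expect_seq D G m (\<lambda>gs. ?F (gs @ [g])) = E g * expect_seq D G m ?F * transpose_mat (C g)"
    if g: "g \<in> G" for g
  proof -
    have "expect_seq D G m (\<lambda>gs. ?F (gs @ [g])) = expect_seq D G m (\<lambda>gs. E g * ?F gs * transpose_mat (C g))"
    proof (rule expect_seq_cong)
      fix gs assume gs: "gs \<in> seqs G m"
      then have "set gs \<subseteq> G" by (simp add: seqs_def)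
      then show "?F (gs @ [g]) = E g * ?F gs * transpose_mat (C g)"
        using carrier[OF gs] C E g P
        by (simp add: seq_prod_snoc subset_iff transpose_mult[of _ D D] del: assoc_mult_mat)
          (rule mult_sandwich_assoc, auto)
    qed
    also have "\<dots> = E g * expect_seq D G m ?F * transpose_mat (C g)"
      using C[OF g] E[OF g] F_carrier by (intro expect_seq_mult_mult) auto
    finally show ?thesis .
  qed
  show ?thesis
    unfolding expect_seq_Suc_snoc
    by (rule arg_cong[where f = "\<lambda>M. _ \<cdot>\<^sub>m M"], rule msum_cong, rule step)
qed

section \<open>Limits of linear recursions\<close>

lemma fixpoint_of_limit_mult_right:
  fixes X :: "nat \<Rightarrow> real mat"
  assumes rec: "\<And>m. X (Suc m) = c \<cdot>\<^sub>m (X m * M)" and X: "\<And>m. X m \<in> carrier_mat r n"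
    and M: "M \<in> carrier_mat n n" and L: "L \<in> carrier_mat r n"
    and lim: "\<And>i j. i < r \<Longrightarrow> j < n \<Longrightarrow>
      (\<lambda>m. X m $$ (i, j)) \<longlonglongrightarrow> L $$ (i, j)"
  shows "L = c \<cdot>\<^sub>m (L * M)"
proof (rule eq_matI)
  fix i j assume "i < dim_row (c \<cdot>\<^sub>m (L * M))" "j < dim_col (c \<cdot>\<^sub>m (L * M))"
  with L M have i: "i < r" and j: "j < n" by auto
  have "(\<lambda>m. X (Suc m) $$ (i, j)) \<longlonglongrightarrow> L $$ (i, j)"
    using lim[OF i j] by (rule LIMSEQ_Suc)
  moreover have "X (Suc m) $$ (i, j) = c * (\<Sum>k<n. X m $$ (i, k) * M $$ (k, j))" for m
    using rec[of m] X[of m] M i j by (simp add: scalar_prod_def lessThan_atLeast0)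
  moreover have "(\<lambda>m. c * (\<Sum>k<n. X m $$ (i, k) * M $$ (k, j)))
      \<longlonglongrightarrow> c * (\<Sum>k<n. L $$ (i, k) * M $$ (k, j))"
    using i by (intro tendsto_intros lim) auto
  ultimately have "L $$ (i, j) = c * (\<Sum>k<n. L $$ (i, k) * M $$ (k, j))"
    using LIMSEQ_unique by auto
  then show "L $$ (i, j) = (c \<cdot>\<^sub>m (L * M)) $$ (i, j)"
    using L M i j by (simp add: scalar_prod_def lessThan_atLeast0)
qed (use L M in auto)

lemma fixpoint_of_limit_mult_left:
  fixes X :: "nat \<Rightarrow> real mat"
  assumes rec: "\<And>m. X (Suc m) = c \<cdot>\<^sub>m (M * X m)" and X: "\<And>m. X m \<in> carrier_mat n r"
    and M: "M \<in> carrier_mat n n" and L: "L \<in> carrier_mat n r"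
    and lim: "\<And>i j. i < n \<Longrightarrow> j < r \<Longrightarrow>
      (\<lambda>m. X m $$ (i, j)) \<longlonglongrightarrow> L $$ (i, j)"
  shows "L = c \<cdot>\<^sub>m (M * L)"
proof -
  have "transpose_mat L = c \<cdot>\<^sub>m (transpose_mat L * transpose_mat M)"
  proof (rule fixpoint_of_limit_mult_right[where X = "\<lambda>m. transpose_mat (X m)"])
    show "transpose_mat (X (Suc m)) = c \<cdot>\<^sub>m (transpose_mat (X m) * transpose_mat M)" for m
      using X[of m] M by (simp add: rec transpose_smult_mat transpose_mult)
  qed (use X M L lim in \<open>auto simp: carrier_matD[OF X]\<close>)
  also have "\<dots> = transpose_mat (c \<cdot>\<^sub>m (M * L))"
    using M L by (simp add: transpose_smult_mat transpose_mult)
  finally show ?thesis by simp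
qed

lemma eq_smult_of_eq_inverse_smult:
  fixes L :: "real mat"
  assumes "L = (1 / p) \<cdot>\<^sub>m f L" "f (0\<^sub>m r c) = 0\<^sub>m r c"
    and "L \<in> carrier_mat r c" "f L \<in> carrier_mat r c"
  shows "f L = p \<cdot>\<^sub>m L"
proof (cases "p = 0")
  case True
  moreover have "0 \<cdot>\<^sub>m f L = 0\<^sub>m r c"
    using assms(4) by (intro eq_matI) auto
  ultimately have "L = 0\<^sub>m r c" using assms(1) by simp
  with assms True show ?thesis by simp
next
  case False
  then have "p \<cdot>\<^sub>m L = f L"
    using assms(4) by (subst assms(1)) (auto simp: smult_smult_mat intro!: eq_matI)
  then show ?thesis ..
qed

lemma tendsto_index_vecm_dag_transpose:
  assumes "mat_tendsto n X L" "\<And>m. X m \<in> carrier_mat n n" "i < 1" "j < n * n"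
  shows "(\<lambda>m. vecm_dag (transpose_mat (X m)) $$ (i, j)) \<longlonglongrightarrow> vecm_dag (transpose_mat L) $$ (i, j)"
proof -
  from assms(1) have L: "L \<in> carrier_mat n n"
    and "\<forall>i<n. \<forall>j<n. (\<lambda>m. X m $$ (i, j)) \<longlonglongrightarrow> L $$ (i, j)"
    by (simp_all add: mat_tendsto_def)
  then show ?thesis
    using assms(3,4) less_mult_imp_div_mod_less[OF assms(4)] 
    by (simp add: carrier_matD[OF assms(2)] carrier_matD[OF L])
qed

lemma tendsto_index_vecm:
  assumes "mat_tendsto n X L" "\<And>m. X m \<in> carrier_mat n n" "i < n * n" "j < 1"
  shows "(\<lambda>m. vecm (X m) $$ (i, j)) \<longlonglongrightarrow> vecm L $$ (i, j)"
proof -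
  from assms(1) have L: "L \<in> carrier_mat n n"
    and "\<forall>i<n. \<forall>j<n. (\<lambda>m. X m $$ (i, j)) \<longlonglongrightarrow> L $$ (i, j)"
    by (simp_all add: mat_tendsto_def)
  then show ?thesis
    using assms(3,4) less_mult_imp_div_mod_less[OF assms(3)] 
    by (simp add: carrier_matD[OF assms(2)] carrier_matD[OF L])
qed

section \<open>The recursions for the sequences A and B\<close>

lemma liou_carrier_mat [simp]: "liou d B \<Phi> \<in> carrier_mat (d * d) (d * d)"
  by (simp add: liou_def)

lemma Pi_tr_carrier_mat [simp]: "Pi_tr d B \<in> carrier_mat (d * d) (d * d)"
  by (simp add: Pi_tr_def)

lemma A_m_carrier_mat [simp]: "A_m d B G Gt p m \<in> carrier_mat (d * d) (d * d)"
  by (simp add: A_m_def expect_seq_def)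

lemma B_m_carrier_mat [simp]: "B_m d B G Gt p m \<in> carrier_mat (d * d) (d * d)"
  by (simp add: B_m_def expect_seq_def)

lemma T_op_carrier_mat [simp]: "T_op d B G Gt \<in> carrier_mat (d * d * (d * d)) (d * d * (d * d))"
  by (simp add: T_op_def)

lemma vecm_dag_transpose_A_m_Suc:
  assumes G: "\<And>g. g \<in> G \<Longrightarrow> g \<in> carrier_mat (d * d) (d * d)"
    and Gt: "\<And>g. g \<in> G \<Longrightarrow> Gt g \<in> carrier_mat (d * d) (d * d)"
  shows "vecm_dag (transpose_mat (A_m d B G Gt p (Suc m)))
    = (1 / p) \<cdot>\<^sub>m (vecm_dag (transpose_mat (A_m d B G Gt p m)) * T_op d B G Gt)"
proof -
  let ?C = "\<lambda>g. g * Pi_tr d B"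
  let ?X = "expect_seq (d * d) G m
    (\<lambda>gs. transpose_mat (seq_prod (d * d) ?C gs) * Pi_tr d B * seq_prod (d * d) Gt gs)"
  let ?K = "msum (d * d * (d * d)) (\<lambda>g. kron (?C g) (Gt g)) G"
  let ?c = "1 / p ^ Suc m * (1 / real (card G))"
  have C: "?C g \<in> carrier_mat (d * d) (d * d)" if "g \<in> G" for g
    using G[OF that] by simp
  have X: "?X \<in> carrier_mat (d * d) (d * d)" by (simp add: expect_seq_def)
  have "vecm_dag (transpose_mat (A_m d B G Gt p (Suc m)))
      = ?c \<cdot>\<^sub>m vecm_dag (transpose_mat (msum (d * d) (\<lambda>g. transpose_mat (?C g) * ?X * Gt g) G))"
    using C Gt by (simp add: A_m_def expect_seq_Suc_sandwich_transpose_left vecm_dag_transpose_smult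
        smult_smult_mat)
  also have "\<dots> = ?c \<cdot>\<^sub>m (vecm_dag (transpose_mat ?X) * ?K)"
    using C Gt X by (simp add: vecm_dag_transpose_mult_msum_kron)
  also have "\<dots> = (1 / p) \<cdot>\<^sub>m (vecm_dag (transpose_mat (A_m d B G Gt p m)) * T_op d B G Gt)"
  proof -
    have "vecm_dag (transpose_mat ?X) \<in> carrier_mat 1 (d * d * (d * d))"
      using X by (rule vecm_dag_transpose_carrier_mat)
    then show ?thesis
      unfolding A_m_def T_op_def vecm_dag_transpose_smult
      by (subst smult_mult_smult[OF _ msum_carrier]) (simp_all add: smult_smult_mat mult_ac)
  qed
  finally show ?thesis .
qed

lemma vecm_B_m_Suc:
  assumes G: "\<And>g. g \<in> G \<Longrightarrow> g \<in> carrier_mat (d * d) (d * d)"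
    and Gt: "\<And>g. g \<in> G \<Longrightarrow> Gt g \<in> carrier_mat (d * d) (d * d)"
  shows "vecm (B_m d B G Gt p (Suc m)) = (1 / p) \<cdot>\<^sub>m (T_op d B G Gt * vecm (B_m d B G Gt p m))"
proof -
  let ?C = "\<lambda>g. g * Pi_tr d B"
  let ?X = "expect_seq (d * d) G m
    (\<lambda>gs. seq_prod (d * d) Gt gs * Pi_tr d B * transpose_mat (seq_prod (d * d) ?C gs))"
  let ?K = "msum (d * d * (d * d)) (\<lambda>g. kron (?C g) (Gt g)) G"
  let ?c = "1 / p ^ Suc m * (1 / real (card G))"
  have C: "?C g \<in> carrier_mat (d * d) (d * d)" if "g \<in> G" for g
    using G[OF that] by simp
  have X: "?X \<in> carrier_mat (d * d) (d * d)" by (simp add: expect_seq_def)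
  have "vecm (B_m d B G Gt p (Suc m))
      = ?c \<cdot>\<^sub>m vecm (msum (d * d) (\<lambda>g. Gt g * ?X * transpose_mat (?C g)) G)"
    using C Gt by (simp add: B_m_def expect_seq_Suc_sandwich_transpose_right vecm_smult smult_smult_mat)
  also have "\<dots> = ?c \<cdot>\<^sub>m (?K * vecm ?X)"
    using C Gt X by (simp add: msum_kron_mult_vecm)
  also have "\<dots> = (1 / p) \<cdot>\<^sub>m (T_op d B G Gt * vecm (B_m d B G Gt p m))"
  proof -
    have "vecm ?X \<in> carrier_mat (d * d * (d * d)) 1"
      using X by (rule vecm_carrier_mat)
    then show ?thesis
      unfolding B_m_def T_op_def vecm_smult
      by (subst smult_mult_smult[OF msum_carrier]) (simp_all add: smult_smult_mat mult_ac)
  qed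
  finally show ?thesis .
qed

theorem lemma1:
  fixes d :: nat and B :: "nat \<Rightarrow> complex mat"
    and G :: "real mat set" and Gt :: "real mat \<Rightarrow> real mat"
    and p :: real and Ainf Binf :: "real mat"
  assumes "d \<ge> 2"
    and "herm_onb d B"
    and "unitary_channel_group d B G"
    and "unitary_2_design d B G"
    and "\<forall>g\<in>G. \<exists>\<Phi>. cptp d \<Phi> \<and> Gt g = liou d B \<Phi>"
    and "eigenvalue (T_op d B G Gt) p"
    and "order (complex_of_real p) (char_poly (map_mat complex_of_real (T_op d B G Gt))) = 1"
    and "\<forall>z. eigenvalue (map_mat complex_of_real (T_op d B G Gt)) z \<longrightarrow>
            z \<noteq> complex_of_real p \<longrightarrow> cmod z < p"
    and "mat_tendsto (d*d) (A_m d B G Gt p) Ainf"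
    and "mat_tendsto (d*d) (B_m d B G Gt p) Binf"
  shows "vecm_dag (transpose_mat Ainf) * T_op d B G Gt = p \<cdot>\<^sub>m vecm_dag (transpose_mat Ainf)
     \<and> T_op d B G Gt * vecm Binf = p \<cdot>\<^sub>m vecm Binf"
proof -
  let ?T = "T_op d B G Gt"
  have G: "g \<in> carrier_mat (d * d) (d * d)" if "g \<in> G" for g
    using assms(3) that by (auto simp: unitary_channel_group_def)
  have Gt: "Gt g \<in> carrier_mat (d * d) (d * d)" if "g \<in> G" for g
    using assms(5) that by auto
  have Ainf: "Ainf \<in> carrier_mat (d * d) (d * d)" and Binf: "Binf \<in> carrier_mat (d * d) (d * d)"
    using assms(9,10) by (simp_all add: mat_tendsto_def)
  have "vecm_dag (transpose_mat Ainf) = (1 / p) \<cdot>\<^sub>m (vecm_dag (transpose_mat Ainf) * ?T)"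
  proof (rule fixpoint_of_limit_mult_right[where X = "\<lambda>m. vecm_dag (transpose_mat (A_m d B G Gt p m))"
        and r = 1 and n = "d * d * (d * d)"])
    show "(\<lambda>m. vecm_dag (transpose_mat (A_m d B G Gt p m)) $$ (i, j))
        \<longlonglongrightarrow> vecm_dag (transpose_mat Ainf) $$ (i, j)" if "i < 1" "j < d * d * (d * d)" for i j
      using tendsto_index_vecm_dag_transpose[OF assms(9) A_m_carrier_mat that] .
  qed (use G Gt vecm_dag_transpose_carrier_mat[OF A_m_carrier_mat] vecm_dag_transpose_carrier_mat[OF Ainf]
      in \<open>simp_all add: vecm_dag_transpose_A_m_Suc\<close>)
  then have "vecm_dag (transpose_mat Ainf) * ?T = p \<cdot>\<^sub>m vecm_dag (transpose_mat Ainf)"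
    by (rule eq_smult_of_eq_inverse_smult)
      (use vecm_dag_transpose_carrier_mat[OF Ainf] in \<open>auto simp: left_mult_zero_mat\<close>)
  moreover have "vecm Binf = (1 / p) \<cdot>\<^sub>m (?T * vecm Binf)"
  proof (rule fixpoint_of_limit_mult_left[where X = "\<lambda>m. vecm (B_m d B G Gt p m)"
        and r = 1 and n = "d * d * (d * d)"])
    show "(\<lambda>m. vecm (B_m d B G Gt p m) $$ (i, j)) \<longlonglongrightarrow> vecm Binf $$ (i, j)"
      if "i < d * d * (d * d)" "j < 1" for i j
      using tendsto_index_vecm[OF assms(10) B_m_carrier_mat that] .
  qed (use G Gt vecm_carrier_mat[OF B_m_carrier_mat] vecm_carrier_mat[OF Binf]
      in \<open>simp_all add: vecm_B_m_Suc\<close>)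
  then have "?T * vecm Binf = p \<cdot>\<^sub>m vecm Binf"
    by (rule eq_smult_of_eq_inverse_smult)
      (use vecm_carrier_mat[OF Binf] in \<open>auto simp: right_mult_zero_mat[OF T_op_carrier_mat]
        intro: mult_carrier_mat[OF T_op_carrier_mat]\<close>)
  ultimately show ?thesis ..
qed

end
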